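(* Assume (H3), (H0)–(H2), that $D(x)$ is irreducible for every $x\in\mathbb T^N$, and that $\mathcal F\neq\emptyset$. Let $x^*\in\mathcal F$ and, for $\lambda\in(0,1)$, let $v^\lambda$ be the unique viscosity solution of $\lambda v_i+H_i(x,Dv_i)+\sum_jd_{ij}(x)v_j=0$ in $\mathbb T^N$, $1\le i\le m$. Then, along a subsequence $\lambda\to0$, $-\lambda v^\lambda\to c\in\mathbb R^m$ and $v^\lambda-v^\lambda(x^* )\to v$ uniformly on $\mathbb T^N$, where $(c,v)$ solves, in the viscosity sense, the ergodic system $$H_i(x,Dv_i)+\sum_{j=1}^m d_{ij}(x)v_j=c_i\quad\text{in }\mathbb T^N,\ 1\le i\le m,$$ $v$ is Lipschitz continuous, and $c\in\ker D(x)$ for all $x$. Moreover $v_i=0$ on $\mathcal F$ for all $i$, $c=(0,\dots,0)$, and $c=(0,\dots,0)$ is the unique vector $c\in\mathbb R^m$ with $c\in\ker D(x)$ for all $x\in\mathbb T^N$ for which the ergodic system has a (continuous viscosity) solution $v$.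
   Context: $\mathbb T^N=\mathbb R^N/\mathbb Z^N$; $D(x)=(d_{ij}(x))_{1\le i,j\le m}$. (H3): each $d_{ij}$ continuous, $d_{ii}\ge0$, $d_{ij}\le0$ ($i\ne j$), $\sum_jd_{ij}\ge0$. Irreducible: for every proper subset $\mathcal I\subsetneq\{1,\dots,m\}$ there exist $i\in\mathcal I$, $j\notin\mathcal I$ with $d_{ij}(x)\ne0$. $H_i(x,p)=F_i(x,p)-f_i(x)$ with (H0) $f_i,F_i$ continuous, $1$-periodic in $x$; (H1) $F_i(x,\cdot)$ convex, coercive ($\inf_xF_i(x,p)\to\infty$ as $|p|\to\infty$), $F_i(x,p)\ge F_i(x,0)=0$; (H2) $f_i\ge0$. $\mathcal F=\{x\in\mathbb T^N:\sum_if_i(x)=0\}$. Viscosity solutions of systems are understood componentwise. *)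

theory Defs
  imports "HOL-Analysis.Analysis"
begin

text \<open>Functions on the torus T^N = R^N / Z^N are represented as Z^N-periodic
  functions on R^N (type real^'n, N = CARD('n)).  The indices 1..m of the
  system are represented by a finite type 'm.\<close>

definition int_vec :: "real^'n \<Rightarrow> bool" where
  "int_vec z \<longleftrightarrow> (\<forall>k. z $ k \<in> \<int>)"

definition torus_periodic :: "(real^'n \<Rightarrow> 'b) \<Rightarrow> bool" where
  "torus_periodic g \<longleftrightarrow> (\<forall>x z. int_vec z \<longrightarrow> g (x + z) = g x)"

definition C1_test :: "(real^'n \<Rightarrow> real) \<Rightarrow> (real^'n \<Rightarrow> real^'n) \<Rightarrow> bool" where
  "C1_test \<phi> D\<phi> \<longleftrightarrow>
     (\<forall>x. (\<phi> has_derivative (\<lambda>h. D\<phi> x \<bullet> h)) (at x)) \<and> continuous_on UNIV D\<phi>"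

definition loc_max_at :: "(real^'n \<Rightarrow> real) \<Rightarrow> real^'n \<Rightarrow> bool" where
  "loc_max_at g x0 \<longleftrightarrow> (\<exists>e>0. \<forall>y\<in>ball x0 e. g y \<le> g x0)"

definition loc_min_at :: "(real^'n \<Rightarrow> real) \<Rightarrow> real^'n \<Rightarrow> bool" where
  "loc_min_at g x0 \<longleftrightarrow> (\<exists>e>0. \<forall>y\<in>ball x0 e. g x0 \<le> g y)"

text \<open>Componentwise viscosity solutions of a weakly coupled system
  G i x (u_1(x),...,u_m(x)) (D u_i(x)) = 0, 1 <= i <= m.\<close>
definition visc_subsol ::
  "('m \<Rightarrow> real^'n \<Rightarrow> ('m \<Rightarrow> real) \<Rightarrow> real^'n \<Rightarrow> real) \<Rightarrow> ('m \<Rightarrow> real^'n \<Rightarrow> real) \<Rightarrow> bool" where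
  "visc_subsol G u \<longleftrightarrow>
     (\<forall>i x0 \<phi> D\<phi>. C1_test \<phi> D\<phi> \<and> loc_max_at (\<lambda>y. u i y - \<phi> y) x0
        \<longrightarrow> G i x0 (\<lambda>j. u j x0) (D\<phi> x0) \<le> 0)"

definition visc_supersol ::
  "('m \<Rightarrow> real^'n \<Rightarrow> ('m \<Rightarrow> real) \<Rightarrow> real^'n \<Rightarrow> real) \<Rightarrow> ('m \<Rightarrow> real^'n \<Rightarrow> real) \<Rightarrow> bool" where
  "visc_supersol G u \<longleftrightarrow>
     (\<forall>i x0 \<phi> D\<phi>. C1_test \<phi> D\<phi> \<and> loc_min_at (\<lambda>y. u i y - \<phi> y) x0
        \<longrightarrow> G i x0 (\<lambda>j. u j x0) (D\<phi> x0) \<ge> 0)"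

definition visc_sol ::
  "('m \<Rightarrow> real^'n \<Rightarrow> ('m \<Rightarrow> real) \<Rightarrow> real^'n \<Rightarrow> real) \<Rightarrow> ('m \<Rightarrow> real^'n \<Rightarrow> real) \<Rightarrow> bool" where
  "visc_sol G u \<longleftrightarrow> (\<forall>i. continuous_on UNIV (u i) \<and> torus_periodic (u i))
      \<and> visc_subsol G u \<and> visc_supersol G u"

text \<open>The discounted system  lam v_i + H_i(x,Dv_i) + sum_j d_ij(x) v_j = 0,
  with H_i(x,p) = F_i(x,p) - f_i(x).\<close>
definition discounted_op ::
  "real \<Rightarrow> ('m \<Rightarrow> real^'n \<Rightarrow> real^'n \<Rightarrow> real) \<Rightarrow> ('m \<Rightarrow> real^'n \<Rightarrow> real)
   \<Rightarrow> (real^'n \<Rightarrow> 'm \<Rightarrow> 'm \<Rightarrow> real) \<Rightarrow> 'm \<Rightarrow> real^'n \<Rightarrow> ('m \<Rightarrow> real) \<Rightarrow> real^'n \<Rightarrow> real" where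
  "discounted_op lam F f d i x r p =
     lam * r i + (F i x p - f i x) + (\<Sum>j\<in>UNIV. d x i j * r j)"

definition ergodic_op ::
  "('m \<Rightarrow> real) \<Rightarrow> ('m \<Rightarrow> real^'n \<Rightarrow> real^'n \<Rightarrow> real) \<Rightarrow> ('m \<Rightarrow> real^'n \<Rightarrow> real)
   \<Rightarrow> (real^'n \<Rightarrow> 'm \<Rightarrow> 'm \<Rightarrow> real) \<Rightarrow> 'm \<Rightarrow> real^'n \<Rightarrow> ('m \<Rightarrow> real) \<Rightarrow> real^'n \<Rightarrow> real" where
  "ergodic_op c F f d i x r p =
     (F i x p - f i x) + (\<Sum>j\<in>UNIV. d x i j * r j) - c i"

definition in_ker_all :: "(real^'n \<Rightarrow> 'm \<Rightarrow> 'm \<Rightarrow> real) \<Rightarrow> ('m::finite \<Rightarrow> real) \<Rightarrow> bool" where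
  "in_ker_all d c \<longleftrightarrow> (\<forall>x i. (\<Sum>j\<in>UNIV. d x i j * c j) = 0)"

definition irreducible_mat :: "('m \<Rightarrow> 'm \<Rightarrow> real) \<Rightarrow> bool" where
  "irreducible_mat A \<longleftrightarrow>
     (\<forall>I. I \<noteq> {} \<and> I \<noteq> UNIV \<longrightarrow> (\<exists>i\<in>I. \<exists>j. j \<notin> I \<and> A i j \<noteq> 0))"

end

theory Submission
  imports Defs "HOL-Complex_Analysis.Great_Picard"
begin

(* Write u^lam for the solution of the discounted system with discount lam.
   (1) A global minimum argument with constant test functions gives u^lam >= 0.
   (2) Testing against steep cones K sqrt(|x - z|^2 + e^2) centred at a point z of the
       zero set of sum_i f_i gives u^lam_i(x) <= K |x - z|; hence u^lam vanishes on that
       set, in particular at x*, and 0 <= u^lam <= C uniformly in lam.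
   (3) Coercivity of F_i turns this bound into a uniform gradient bound for subsolutions,
       hence an lam-independent Lipschitz constant.
   (4) Arzela-Ascoli on the unit cube yields a subsequence along which u^lam converges
       uniformly on the torus to some v, while lam u^lam -> 0 uniformly.
   (5) Stability of viscosity sub-/supersolutions under uniform convergence shows that v
       solves the ergodic system with c = 0.
   (6) Uniqueness of c: irreducibility forces every c in ker D(x) to be a constant vector
       (t,...,t); a minimum argument gives t <= 0 and a cone argument at x* gives t >= 0.
   The file first develops the general tools (periodic functions, cone test functions,
   viscosity inequalities at extrema, stability, kernels of M-matrices, compactness),
   then the a priori estimates for the system in a locale, and finally the theorem. *)

section \<open>Periodic functions on the torus\<close>

definition torus_rep :: "real^'n \<Rightarrow> real^'n \<Rightarrow> real^'n" where
  "torus_rep a x = x - (\<chi> k. real_of_int (floor (x$k - a$k)))"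

lemma periodic_torus_rep:
  fixes g :: "real^'n \<Rightarrow> 'b"
  assumes "torus_periodic g"
  shows "g (torus_rep a x) = g x"
proof -
  have "int_vec ((\<chi> k. real_of_int (floor (x$k - a$k))) :: real^'n)"
    unfolding int_vec_def by simp
  then have "g (torus_rep a x + (\<chi> k. real_of_int (floor (x$k - a$k)))) = g (torus_rep a x)"
    using assms unfolding torus_periodic_def by blast
  then show ?thesis unfolding torus_rep_def by simp
qed

lemma torus_rep_component:
  shows "0 \<le> (torus_rep a x - a)$k" "(torus_rep a x - a)$k < 1"
  unfolding torus_rep_def by (simp_all add: floor_less_cancel) linarith+

lemma torus_rep_in_unit_cube: "torus_rep 0 x \<in> cbox 0 1"
  using torus_rep_component[of 0 x] by (auto simp: mem_box_cart less_imp_le)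

lemma norm_torus_rep_le:
  fixes x a :: "real^'n"
  shows "norm (torus_rep a x - a) \<le> real CARD('n)"
proof -
  have "norm (torus_rep a x - a) \<le> (\<Sum>k\<in>UNIV. \<bar>(torus_rep a x - a)$k\<bar>)"
    by (rule norm_le_l1_cart)
  also have "\<dots> \<le> (\<Sum>k\<in>(UNIV::'n set). 1)"
  proof (rule sum_mono)
    fix k
    show "\<bar>(torus_rep a x - a)$k\<bar> \<le> 1" using torus_rep_component[of a x k] by simp
  qed
  finally show ?thesis by simp
qed

lemma periodic_uminus:
  fixes g :: "real^'n \<Rightarrow> real"
  assumes "continuous_on UNIV g" "torus_periodic g"
  shows "continuous_on UNIV (\<lambda>x. - g x)" "torus_periodic (\<lambda>x. - g x)"
proof -
  show "continuous_on UNIV (\<lambda>x. - g x)" using assms(1) by (intro continuous_intros)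
  show "torus_periodic (\<lambda>x. - g x)" using assms(2) by (simp add: torus_periodic_def)
qed

text \<open>Continuous periodic functions behave like functions on a compact space.\<close>
lemma periodic_attains_max:
  fixes g :: "real^'n \<Rightarrow> real"
  assumes "continuous_on UNIV g" "torus_periodic g"
  shows "\<exists>x0. \<forall>x. g x \<le> g x0"
proof -
  have "continuous_on (cbox 0 1) g" using assms(1) by (rule continuous_on_subset) auto
  moreover have "(0::real^'n) \<in> cbox 0 1" by (simp add: mem_box_cart)
  ultimately obtain x0 where "\<forall>y\<in>cbox 0 1. g y \<le> g x0"
    using continuous_attains_sup[of "cbox 0 1" g] compact_cbox by blast
  then have "g x \<le> g x0" for x
    using periodic_torus_rep[OF assms(2), of 0 x] torus_rep_in_unit_cube[of x] by metis
  then show ?thesis by blast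
qed

lemma periodic_bounded:
  fixes g :: "real^'n \<Rightarrow> real"
  assumes "continuous_on UNIV g" "torus_periodic g"
  shows "\<exists>B. \<forall>x. \<bar>g x\<bar> \<le> B"
proof -
  obtain a b where "\<forall>x. g x \<le> g a" "\<forall>x. - g x \<le> - g b"
    using periodic_attains_max[OF assms] periodic_attains_max[OF periodic_uminus[OF assms]] by blast
  then have "\<bar>g x\<bar> \<le> \<bar>g a\<bar> + \<bar>g b\<bar>" for x by (smt (verit))
  then show ?thesis by blast
qed

lemma finite_index_attains_max:
  fixes c :: "'m::finite \<Rightarrow> real"
  shows "\<exists>i0. \<forall>j. c j \<le> c i0"
proof -
  have "Max (range c) \<in> range c" by (rule Max_in) auto
  then obtain i0 where i0: "Max (range c) = c i0" by (rule rangeE) (rule that)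
  have "c j \<le> Max (range c)" for j by (rule Max_ge) auto
  then have "c j \<le> c i0" for j unfolding i0 .
  then show ?thesis by blast
qed

lemma finite_family_attains_max:
  fixes h :: "'m::finite \<Rightarrow> 'a \<Rightarrow> real"
  assumes "\<And>i. \<exists>x0. \<forall>x. h i x \<le> h i x0"
  shows "\<exists>i x0. \<forall>j x. h j x \<le> h i x0"
proof -
  obtain X where X: "\<And>i x. h i x \<le> h i (X i)" using assms by metis
  obtain i where i: "\<And>j. h j (X j) \<le> h i (X i)"
    using finite_index_attains_max[of "\<lambda>i. h i (X i)"] by blast
  have "h j x \<le> h i (X i)" for j x using order_trans[OF X[of j x] i] .
  then show ?thesis by blast
qed

lemma system_attains_min:
  fixes u :: "'m::finite \<Rightarrow> real^'n \<Rightarrow> real"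
  assumes "\<And>i. continuous_on UNIV (u i) \<and> torus_periodic (u i)"
  shows "\<exists>k x0. \<forall>j x. u k x0 \<le> u j x"
proof -
  have "\<exists>x0. \<forall>x. - u i x \<le> - u i x0" for i
    using assms[of i] periodic_attains_max[OF periodic_uminus] by blast
  from finite_family_attains_max[of "\<lambda>i x. - u i x", OF this] show ?thesis by auto
qed

section \<open>Test functions\<close>

lemma C1_test_const: "C1_test (\<lambda>x::real^'n. c) (\<lambda>x. 0::real^'n)"
proof -
  have e: "(\<lambda>h. (0::real^'n) \<bullet> h) = (\<lambda>h. 0)" by (rule ext) simp
  show ?thesis unfolding C1_test_def e by (simp add: has_derivative_const)
qed

lemma C1_test_continuous: "C1_test \<phi> D\<phi> \<Longrightarrow> continuous_on UNIV \<phi>"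
  unfolding C1_test_def
  by (intro continuous_at_imp_continuous_on ballI) (blast intro: has_derivative_continuous)

lemma C1_test_minus: "C1_test \<phi> D\<phi> \<Longrightarrow> C1_test (\<lambda>x. - \<phi> x) (\<lambda>x. - D\<phi> x)"
  unfolding C1_test_def
proof (intro conjI allI)
  fix x assume A: "(\<forall>x. (\<phi> has_derivative (\<lambda>h. D\<phi> x \<bullet> h)) (at x)) \<and> continuous_on UNIV D\<phi>"
  then have "((\<lambda>x. - \<phi> x) has_derivative (\<lambda>h. - (D\<phi> x \<bullet> h))) (at x)"
    by (intro has_derivative_minus) auto
  then show "((\<lambda>x. - \<phi> x) has_derivative (\<lambda>h. - D\<phi> x \<bullet> h)) (at x)" by simp
next
  assume "(\<forall>x. (\<phi> has_derivative (\<lambda>h. D\<phi> x \<bullet> h)) (at x)) \<and> continuous_on UNIV D\<phi>"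
  then show "continuous_on UNIV (\<lambda>x. - D\<phi> x)" by (intro continuous_intros) auto
qed

text \<open>Adding |y - x0|^2 turns a local maximum at x0 into a strict one.\<close>
lemma C1_test_add_square:
  fixes x0 :: "real^'n"
  assumes "C1_test \<phi> D\<phi>"
  shows "C1_test (\<lambda>y. \<phi> y + (norm (y - x0))\<^sup>2) (\<lambda>y. D\<phi> y + 2 *\<^sub>R (y - x0))"
  unfolding C1_test_def
proof (intro conjI allI)
  fix x :: "real^'n"
  have "(\<phi> has_derivative (\<lambda>h. D\<phi> x \<bullet> h)) (at x)" using assms unfolding C1_test_def by blast
  then have "((\<lambda>y. \<phi> y + (y - x0) \<bullet> (y - x0)) has_derivative
      (\<lambda>h. D\<phi> x \<bullet> h + (h \<bullet> (x - x0) + (x - x0) \<bullet> h))) (at x)"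
    by (auto intro!: derivative_eq_intros)
  moreover have "(\<lambda>h. D\<phi> x \<bullet> h + (h \<bullet> (x - x0) + (x - x0) \<bullet> h)) = (\<lambda>h. (D\<phi> x + 2 *\<^sub>R (x - x0)) \<bullet> h)"
    by (simp add: fun_eq_iff inner_add_left inner_commute[of _ "x - x0"])
  ultimately show "((\<lambda>y. \<phi> y + (norm (y - x0))\<^sup>2) has_derivative (\<lambda>h. (D\<phi> x + 2 *\<^sub>R (x - x0)) \<bullet> h)) (at x)"
    by (simp add: power2_norm_eq_inner)
next
  show "continuous_on UNIV (\<lambda>y. D\<phi> y + 2 *\<^sub>R (y - x0))"
    using assms unfolding C1_test_def by (intro continuous_intros) auto
qed

definition smooth_cone :: "real \<Rightarrow> real \<Rightarrow> real^'n \<Rightarrow> real^'n \<Rightarrow> real" where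
  "smooth_cone K e z x = K * sqrt ((norm (x - z))\<^sup>2 + e\<^sup>2)"

definition smooth_cone_grad :: "real \<Rightarrow> real \<Rightarrow> real^'n \<Rightarrow> real^'n \<Rightarrow> real^'n" where
  "smooth_cone_grad K e z x = (K / sqrt ((norm (x - z))\<^sup>2 + e\<^sup>2)) *\<^sub>R (x - z)"

lemma C1_test_cone:
  fixes z :: "real^'n"
  assumes e: "e > 0"
  shows "C1_test (smooth_cone K e z) (smooth_cone_grad K e z)"
  unfolding C1_test_def
proof (intro conjI allI)
  fix x :: "real^'n"
  define a where "a = sqrt ((x - z) \<bullet> (x - z) + e\<^sup>2)"
  have a: "a > 0" unfolding a_def using e by (simp add: add_nonneg_pos)
  have "((\<lambda>y. K * sqrt ((y - z) \<bullet> (y - z) + e\<^sup>2)) has_derivative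
        (\<lambda>h. K * (inverse a / 2 * (h \<bullet> (x - z) + (x - z) \<bullet> h)))) (at x)"
    using a unfolding a_def by (auto intro!: derivative_eq_intros)
  moreover have "(\<lambda>h. K * (inverse a / 2 * (h \<bullet> (x - z) + (x - z) \<bullet> h))) = (\<lambda>h. smooth_cone_grad K e z x \<bullet> h)"
  proof (rule ext)
    fix h
    have "smooth_cone_grad K e z x \<bullet> h = (K / a) * ((x - z) \<bullet> h)"
      unfolding smooth_cone_grad_def inner_scaleR_left a_def power2_norm_eq_inner ..
    then show "K * (inverse a / 2 * (h \<bullet> (x - z) + (x - z) \<bullet> h)) = smooth_cone_grad K e z x \<bullet> h"
      by (simp add: inner_commute[of h "x - z"] field_simps)
  qed
  ultimately show "(smooth_cone K e z has_derivative (\<lambda>h. smooth_cone_grad K e z x \<bullet> h)) (at x)"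
    by (simp add: smooth_cone_def[abs_def] power2_norm_eq_inner)
next
  show "continuous_on UNIV (smooth_cone_grad K e z)"
    unfolding smooth_cone_grad_def using e by (intro continuous_intros) (auto simp: add_nonneg_pos)
qed

lemma cone_continuous: "continuous_on UNIV (smooth_cone K e z)"
  unfolding smooth_cone_def by (intro continuous_intros)

lemma cone_nonneg: "K \<ge> 0 \<Longrightarrow> 0 \<le> smooth_cone K e z x"
  unfolding smooth_cone_def by simp

lemma cone_lower: "K \<ge> 0 \<Longrightarrow> K * norm (x - z) \<le> smooth_cone K e z x"
  unfolding smooth_cone_def by (intro mult_left_mono) (auto intro: real_le_rsqrt)

lemma cone_upper: "K \<ge> 0 \<Longrightarrow> e \<ge> 0 \<Longrightarrow> smooth_cone K e z x \<le> K * (norm (x - z) + e)"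
  unfolding smooth_cone_def
  by (intro mult_left_mono real_le_lsqrt) (auto simp: power2_sum)

lemma smooth_cone_grad_small_near_vertex:
  assumes K: "K > 0" and e: "e > 0" and small: "norm (smooth_cone_grad K e z x) < K / 2"
  shows "norm (x - z) < e"
proof -
  define n where "n = norm (x - z)"
  define s where "s = sqrt (n\<^sup>2 + e\<^sup>2)"
  have s: "s > 0" unfolding s_def using e by (simp add: add_nonneg_pos)
  have "norm (smooth_cone_grad K e z x) = K * n / s"
    unfolding smooth_cone_grad_def n_def s_def using K s by (simp add: n_def s_def)
  with small have "2 * n < s" using K s by (simp add: field_simps)
  then have "(2 * n)\<^sup>2 < s\<^sup>2" using n_def by (intro power_strict_mono) auto
  then have "4 * n\<^sup>2 < n\<^sup>2 + e\<^sup>2" unfolding s_def by (simp add: power_mult_distrib)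
  then have "n\<^sup>2 < e\<^sup>2" by (smt (verit) zero_le_power2)
  then show ?thesis using e n_def by (simp add: power_less_imp_less_base)
qed

lemma bounded_minus_cone_attains_max:
  fixes g :: "real^'n \<Rightarrow> real"
  assumes cont: "continuous_on UNIV g" and B: "\<And>x. g x \<le> B" and K: "K > 0"
  shows "\<exists>x0. \<forall>x. g x - smooth_cone K e z x \<le> g x0 - smooth_cone K e z x0"
proof -
  define r where "r = (B - g z + smooth_cone K e z z) / K"
  have r: "r \<ge> 0" unfolding r_def using B[of z] cone_nonneg[of K e z z] K by simp
  have "continuous_on (cball z r) (\<lambda>x. g x - smooth_cone K e z x)"
    by (rule continuous_on_subset[of UNIV]) (intro continuous_intros cont cone_continuous, simp)
  then obtain x0 where x0: "\<forall>y\<in>cball z r. g y - smooth_cone K e z y \<le> g x0 - smooth_cone K e z x0"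
    using continuous_attains_sup[of "cball z r"] r by auto
  have "g x - smooth_cone K e z x \<le> g x0 - smooth_cone K e z x0" for x
  proof (cases "x \<in> cball z r")
    case False
    then have "K * r < K * norm (x - z)" using K by (simp add: dist_norm norm_minus_commute)
    also have "\<dots> \<le> smooth_cone K e z x" by (rule cone_lower) (use K in simp)
    finally have "g x - smooth_cone K e z x < B - K * r" using B[of x] by simp
    also have "B - K * r = g z - smooth_cone K e z z" unfolding r_def using K by simp
    also have "\<dots> \<le> g x0 - smooth_cone K e z x0" using x0 r by simp
    finally show ?thesis by simp
  qed (use x0 in blast)
  then show ?thesis by blast
qed

lemma system_minus_cone_attains_max:
  fixes u :: "'m::finite \<Rightarrow> real^'n \<Rightarrow> real"
  assumes "\<And>i. continuous_on UNIV (u i) \<and> torus_periodic (u i)" and "K > 0"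
  shows "\<exists>i x0. \<forall>j x. u j x - smooth_cone K e z x \<le> u i x0 - smooth_cone K e z x0"
proof (rule finite_family_attains_max)
  fix i
  obtain B where "\<forall>x. \<bar>u i x\<bar> \<le> B" using periodic_bounded assms(1) by blast
  then show "\<exists>x0. \<forall>x. u i x - smooth_cone K e z x \<le> u i x0 - smooth_cone K e z x0"
    using bounded_minus_cone_attains_max[of "u i" B K] assms by (auto simp: abs_le_iff)
qed

section \<open>Viscosity inequalities at extremum points\<close>

lemma subsol_at_global_max:
  assumes "visc_subsol G u" "C1_test \<phi> D\<phi>" "\<And>x. u k x - \<phi> x \<le> u k x0 - \<phi> x0"
  shows "G k x0 (\<lambda>j. u j x0) (D\<phi> x0) \<le> 0"
proof -
  have "loc_max_at (\<lambda>y. u k y - \<phi> y) x0"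
    unfolding loc_max_at_def using assms(3) by (intro exI[of _ 1]) auto
  then show ?thesis using assms(1,2) unfolding visc_subsol_def by blast
qed

lemma supersol_at_global_min:
  fixes u :: "'m \<Rightarrow> real^'n \<Rightarrow> real"
  assumes "visc_supersol G u" "\<And>x. u k x0 \<le> u k x"
  shows "G k x0 (\<lambda>j. u j x0) 0 \<ge> 0"
proof -
  have "loc_min_at (\<lambda>y. u k y - u k x0) x0"
    unfolding loc_min_at_def using assms(2) by (intro exI[of _ 1]) auto
  then show ?thesis
    using assms(1) C1_test_const[of "u k x0"] unfolding visc_supersol_def by blast
qed

text \<open>A periodic function that is a viscosity subsolution of |Du| < R (in the sense that
  every test gradient at a local maximum is smaller than R) is 2R-Lipschitz: compare with
  cones of slope 2R whose vertex may be placed anywhere.\<close>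
lemma lipschitz_of_gradient_bound:
  fixes g :: "real^'n \<Rightarrow> real"
  assumes cont: "continuous_on UNIV g" and per: "torus_periodic g" and R: "R > 0"
    and grad: "\<And>x0 \<phi> D\<phi>. C1_test \<phi> D\<phi> \<Longrightarrow> loc_max_at (\<lambda>y. g y - \<phi> y) x0 \<Longrightarrow> norm (D\<phi> x0) < R"
  shows "(2*R)-lipschitz_on UNIV g"
proof -
  obtain B where "\<forall>x. \<bar>g x\<bar> \<le> B" using periodic_bounded cont per by blast
  then have B: "\<And>x. g x \<le> B" by (simp add: abs_le_iff)
  have one_sided: "g x - g y \<le> 2 * R * norm (x - y)" for x y
  proof (rule field_le_epsilon)
    fix t :: real assume t: "t > 0"
    define eta where "eta = t / (2 * R + 1)"
    have eta: "eta > 0" unfolding eta_def using t R by simp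
    have "(2 * R + 1) * eta = t" unfolding eta_def using R by simp
    then have eta_sum: "2 * R * eta + eta = t" by (simp add: algebra_simps)
    obtain dl where dl: "dl > 0" "\<forall>x'. dist x' y < dl \<longrightarrow> dist (g x') (g y) < eta"
      using cont eta unfolding continuous_on_iff by blast
    define e where "e = min dl eta"
    have e: "e > 0" "e \<le> dl" "e \<le> eta" unfolding e_def using dl eta by auto
    obtain x0 where x0: "\<forall>x. g x - smooth_cone (2*R) e y x \<le> g x0 - smooth_cone (2*R) e y x0"
      using bounded_minus_cone_attains_max[of g B "2*R" e y] cont B R by auto
    then have "loc_max_at (\<lambda>x. g x - smooth_cone (2*R) e y x) x0"
      unfolding loc_max_at_def by (intro exI[of _ 1]) auto
    then have "norm (smooth_cone_grad (2*R) e y x0) < R" by (rule grad[OF C1_test_cone[OF e(1)]])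
    then have "norm (x0 - y) < e" using smooth_cone_grad_small_near_vertex[of "2*R" e y x0] R e by simp
    then have "dist (g x0) (g y) < eta" using dl e by (simp add: dist_norm)
    then have g0: "g x0 < g y + eta" by (auto simp: dist_real_def abs_less_iff)
    have "g x - 2*R*norm (x - y) - 2*R*e \<le> g x - smooth_cone (2*R) e y x"
      using cone_upper[of "2*R" e y x] R e by (simp add: algebra_simps)
    also have "\<dots> \<le> g x0 - smooth_cone (2*R) e y x0" using x0 by blast
    also have "\<dots> \<le> g x0" using cone_nonneg[of "2*R" e y x0] R by simp
    finally have "g x - g y \<le> 2*R*norm (x - y) + 2*R*e + eta" using g0 by simp
    moreover have "2*R*e \<le> 2*R*eta" using e R by simp
    ultimately show "g x - g y \<le> 2 * R * norm (x - y) + t" using eta_sum by linarith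
  qed
  show ?thesis
  proof (rule lipschitz_onI)
    fix x y :: "real^'n"
    show "dist (g x) (g y) \<le> 2 * R * dist x y"
      using one_sided[of x y] one_sided[of y x]
      by (simp add: dist_real_def dist_norm norm_minus_commute abs_le_iff)
  qed (use R in simp)
qed

section \<open>Stability of viscosity solutions under uniform convergence\<close>

lemma uniform_limit_tendsto_compose:
  fixes u :: "nat \<Rightarrow> 'a::metric_space \<Rightarrow> real"
  assumes unif: "uniform_limit UNIV u v sequentially" and vc: "continuous_on UNIV v"
    and X: "X \<longlonglongrightarrow> x0"
  shows "(\<lambda>k. u k (X k)) \<longlonglongrightarrow> v x0"
proof (rule tendstoI)
  fix e :: real assume e: "e > 0"
  have "isCont v x0" using vc by (simp add: continuous_on_eq_continuous_at)
  then have "(\<lambda>k. v (X k)) \<longlonglongrightarrow> v x0" using X by (rule isCont_tendsto_compose)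
  then have ev1: "\<forall>\<^sub>F k in sequentially. dist (v (X k)) (v x0) < e/2" using e by (intro tendstoD) auto
  have ev2: "\<forall>\<^sub>F k in sequentially. \<forall>x\<in>UNIV. dist (u k x) (v x) < e/2"
    using e by (intro uniform_limitD[OF unif]) auto
  show "\<forall>\<^sub>F k in sequentially. dist (u k (X k)) (v x0) < e"
    using ev1 ev2
  proof eventually_elim
    case (elim k)
    then have "dist (u k (X k)) (v (X k)) < e/2" by blast
    then show ?case using elim(1) dist_triangle[of "u k (X k)" "v x0" "v (X k)"] by linarith
  qed
qed

lemma maximizers_converge:
  fixes u :: "nat \<Rightarrow> real^'n \<Rightarrow> real"
  assumes unif: "uniform_limit UNIV u v sequentially" and r: "r > 0"
    and vmax: "\<And>y. y \<in> cball x0 r \<Longrightarrow> v y - \<phi> y \<le> v x0 - \<phi> x0"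
    and XS: "\<And>k. X k \<in> cball x0 r"
    and Xmax: "\<And>k y. y \<in> cball x0 r \<Longrightarrow>
       u k y - (\<phi> y + (norm (y - x0))\<^sup>2) \<le> u k (X k) - (\<phi> (X k) + (norm (X k - x0))\<^sup>2)"
  shows "X \<longlonglongrightarrow> x0"
proof (rule tendstoI)
  fix eta :: real assume eta: "eta > 0"
  define h where "h = min eta r"
  have h: "h > 0" "h \<le> eta" unfolding h_def using eta r by auto
  have "\<forall>\<^sub>F k in sequentially. \<forall>x\<in>UNIV. dist (u k x) (v x) < h\<^sup>2 / 3"
    using h by (intro uniform_limitD[OF unif]) auto
  then show "\<forall>\<^sub>F k in sequentially. dist (X k) x0 < eta"
  proof eventually_elim
    case (elim k)
    then have U: "\<And>x. \<bar>u k x - v x\<bar> < h\<^sup>2 / 3" by (simp add: dist_real_def)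
    show ?case
    proof (rule ccontr)
      assume "\<not> dist (X k) x0 < eta"
      then have "h\<^sup>2 \<le> (norm (X k - x0))\<^sup>2" using h by (simp add: dist_norm power_mono)
      then have "u k (X k) - (\<phi> (X k) + (norm (X k - x0))\<^sup>2) < v (X k) - \<phi> (X k) - 2 * h\<^sup>2 / 3"
        using U[of "X k"] by linarith
      also have "\<dots> \<le> v x0 - \<phi> x0 - 2 * h\<^sup>2 / 3" using vmax[OF XS] by simp
      also have "\<dots> < u k x0 - (\<phi> x0 + (norm (x0 - x0))\<^sup>2)"
      proof -
        have "v x0 - 2 * h\<^sup>2 / 3 < u k x0" using U[of x0] zero_le_power2[of h] by linarith
        then show ?thesis by simp
      qed
      finally show False using Xmax[of x0 k] r by simp
    qed
  qed
qed

lemma visc_subsol_stable: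
  fixes u :: "nat \<Rightarrow> 'm::finite \<Rightarrow> real^'n \<Rightarrow> real" and v :: "'m \<Rightarrow> real^'n \<Rightarrow> real"
  assumes sub: "\<And>k. visc_subsol (G k) (u k)"
    and ucont: "\<And>k i. continuous_on UNIV (u k i)"
    and unif: "\<And>i. uniform_limit UNIV (\<lambda>k. u k i) (v i) sequentially"
    and vcont: "\<And>i. continuous_on UNIV (v i)"
    and conv: "\<And>i x0 r p xk rk pk. xk \<longlonglongrightarrow> x0 \<Longrightarrow> (\<And>j. (\<lambda>k. rk k j) \<longlonglongrightarrow> r j) \<Longrightarrow> pk \<longlonglongrightarrow> p
                 \<Longrightarrow> (\<lambda>k. G k i (xk k) (rk k) (pk k)) \<longlonglongrightarrow> G0 i x0 r p"
  shows "visc_subsol G0 v"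
  unfolding visc_subsol_def
proof (intro allI impI, elim conjE)
  fix i x0 \<phi> D\<phi>
  assume C1: "C1_test \<phi> D\<phi>" and mx: "loc_max_at (\<lambda>y. v i y - \<phi> y) x0"
  obtain e where e: "e > 0" "\<forall>y\<in>ball x0 e. v i y - \<phi> y \<le> v i x0 - \<phi> x0"
    using mx unfolding loc_max_at_def by auto
  define r where "r = e / 2"
  have r: "r > 0" and ball: "cball x0 r \<subseteq> ball x0 e" unfolding r_def using e by auto
  define \<psi> where "\<psi> = (\<lambda>y. \<phi> y + (norm (y - x0))\<^sup>2)"
  define D\<psi> where "D\<psi> = (\<lambda>y. D\<phi> y + 2 *\<^sub>R (y - x0))"
  have C1\<psi>: "C1_test \<psi> D\<psi>" unfolding \<psi>_def D\<psi>_def by (rule C1_test_add_square[OF C1])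
  have "\<exists>xk\<in>cball x0 r. \<forall>y\<in>cball x0 r. u k i y - \<psi> y \<le> u k i xk - \<psi> xk" for k
  proof (rule continuous_attains_sup)
    show "continuous_on (cball x0 r) (\<lambda>y. u k i y - \<psi> y)"
      by (rule continuous_on_subset[of UNIV])
        (intro continuous_intros ucont C1_test_continuous[OF C1\<psi>], simp)
  qed (use r in auto)
  then obtain X where XS: "\<And>k. X k \<in> cball x0 r"
    and Xmax: "\<And>k y. y \<in> cball x0 r \<Longrightarrow> u k i y - \<psi> y \<le> u k i (X k) - \<psi> (X k)"
    by metis
  have Xlim: "X \<longlonglongrightarrow> x0"
  proof (rule maximizers_converge[OF unif r _ XS])
    show "v i y - \<phi> y \<le> v i x0 - \<phi> x0" if "y \<in> cball x0 r" for y
      using e(2) ball that by blast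
    show "u k i y - (\<phi> y + (norm (y - x0))\<^sup>2) \<le> u k i (X k) - (\<phi> (X k) + (norm (X k - x0))\<^sup>2)"
      if "y \<in> cball x0 r" for k y
      using Xmax[OF that] unfolding \<psi>_def .
  qed
  have "\<forall>\<^sub>F k in sequentially. dist (X k) x0 < r/2"
    using tendstoD[OF Xlim, of "r/2"] r by simp
  then have evmax: "\<forall>\<^sub>F k in sequentially. G k i (X k) (\<lambda>j. u k j (X k)) (D\<psi> (X k)) \<le> 0"
  proof eventually_elim
    case (elim k)
    have "ball (X k) (r/2) \<subseteq> cball x0 r"
    proof
      fix y assume "y \<in> ball (X k) (r/2)"
      then show "y \<in> cball x0 r" using elim dist_triangle[of x0 y "X k"] by (simp add: dist_commute)
    qed
    then have "\<forall>y\<in>ball (X k) (r/2). u k i y - \<psi> y \<le> u k i (X k) - \<psi> (X k)"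
      using Xmax by (meson subsetD)
    then have "loc_max_at (\<lambda>y. u k i y - \<psi> y) (X k)"
      unfolding loc_max_at_def using r by (intro exI[of _ "r/2"]) simp
    then show ?case using sub[of k] C1\<psi> unfolding visc_subsol_def by blast
  qed
  have "isCont D\<psi> x0" using C1\<psi> unfolding C1_test_def by (simp add: continuous_on_eq_continuous_at)
  then have "(\<lambda>k. D\<psi> (X k)) \<longlonglongrightarrow> D\<psi> x0" using Xlim by (rule isCont_tendsto_compose)
  then have grad_lim: "(\<lambda>k. D\<psi> (X k)) \<longlonglongrightarrow> D\<phi> x0" unfolding D\<psi>_def by simp
  have val_lim: "(\<lambda>k. u k j (X k)) \<longlonglongrightarrow> v j x0" for j
    by (rule uniform_limit_tendsto_compose[OF unif vcont Xlim])
  have "(\<lambda>k. G k i (X k) (\<lambda>j. u k j (X k)) (D\<psi> (X k))) \<longlonglongrightarrow> G0 i x0 (\<lambda>j. v j x0) (D\<phi> x0)"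
    by (rule conv[OF Xlim val_lim grad_lim])
  then show "G0 i x0 (\<lambda>j. v j x0) (D\<phi> x0) \<le> 0"
    using evmax by (rule tendsto_upperbound) simp
qed

lemma visc_supersol_iff_subsol_neg:
  "visc_supersol G u \<longleftrightarrow> visc_subsol (\<lambda>i x r p. - G i x (\<lambda>j. - r j) (- p)) (\<lambda>i x. - u i x)"
proof
  assume A: "visc_supersol G u"
  show "visc_subsol (\<lambda>i x r p. - G i x (\<lambda>j. - r j) (- p)) (\<lambda>i x. - u i x)"
    unfolding visc_subsol_def
  proof (intro allI impI, elim conjE)
    fix i x0 \<phi> D\<phi>
    assume C: "C1_test \<phi> D\<phi>" and M: "loc_max_at (\<lambda>y. - u i y - \<phi> y) x0"
    have "loc_min_at (\<lambda>y. u i y - (- \<phi> y)) x0"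
      using M unfolding loc_max_at_def loc_min_at_def by (smt (verit, best))
    then have "G i x0 (\<lambda>j. u j x0) (- D\<phi> x0) \<ge> 0"
      using A C1_test_minus[OF C] unfolding visc_supersol_def by blast
    then show "- G i x0 (\<lambda>j. - (- u j x0)) (- D\<phi> x0) \<le> 0" by simp
  qed
next
  assume A: "visc_subsol (\<lambda>i x r p. - G i x (\<lambda>j. - r j) (- p)) (\<lambda>i x. - u i x)"
  show "visc_supersol G u"
    unfolding visc_supersol_def
  proof (intro allI impI, elim conjE)
    fix i x0 \<phi> D\<phi>
    assume C: "C1_test \<phi> D\<phi>" and M: "loc_min_at (\<lambda>y. u i y - \<phi> y) x0"
    have "loc_max_at (\<lambda>y. - u i y - (- \<phi> y)) x0"
      using M unfolding loc_max_at_def loc_min_at_def by (smt (verit, best))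
    then have "- G i x0 (\<lambda>j. - (- u j x0)) (- (- D\<phi> x0)) \<le> 0"
      using A C1_test_minus[OF C] unfolding visc_subsol_def by blast
    then show "G i x0 (\<lambda>j. u j x0) (D\<phi> x0) \<ge> 0" by simp
  qed
qed

lemma visc_supersol_stable:
  fixes u :: "nat \<Rightarrow> 'm::finite \<Rightarrow> real^'n \<Rightarrow> real" and v :: "'m \<Rightarrow> real^'n \<Rightarrow> real"
  assumes sup: "\<And>k. visc_supersol (G k) (u k)"
    and ucont: "\<And>k i. continuous_on UNIV (u k i)"
    and unif: "\<And>i. uniform_limit UNIV (\<lambda>k. u k i) (v i) sequentially"
    and vcont: "\<And>i. continuous_on UNIV (v i)"
    and conv: "\<And>i x0 r p xk rk pk. xk \<longlonglongrightarrow> x0 \<Longrightarrow> (\<And>j. (\<lambda>k. rk k j) \<longlonglongrightarrow> r j) \<Longrightarrow> pk \<longlonglongrightarrow> p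
                 \<Longrightarrow> (\<lambda>k. G k i (xk k) (rk k) (pk k)) \<longlonglongrightarrow> G0 i x0 r p"
  shows "visc_supersol G0 v"
  unfolding visc_supersol_iff_subsol_neg
proof (rule visc_subsol_stable[where u = "\<lambda>k i x. - u k i x"])
  show "visc_subsol (\<lambda>i x r p. - G k i x (\<lambda>j. - r j) (- p)) (\<lambda>i x. - u k i x)" for k
    using sup[of k] unfolding visc_supersol_iff_subsol_neg .
  show "uniform_limit UNIV (\<lambda>k x. - u k i x) (\<lambda>x. - v i x) sequentially" for i
    using uniform_limit_uminus[OF unif[of i]] by simp
  show "(\<lambda>k. - G k i (xk k) (\<lambda>j. - rk k j) (- pk k)) \<longlonglongrightarrow> - G0 i x0 (\<lambda>j. - r j) (- p)"
    if "xk \<longlonglongrightarrow> x0" "\<And>j. (\<lambda>k. rk k j) \<longlonglongrightarrow> r j" "pk \<longlonglongrightarrow> p" for i x0 r p xk rk pk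
    using that by (intro tendsto_minus conv) (auto intro: tendsto_minus)
  show "continuous_on UNIV (\<lambda>x. - u k i x)" for k i using ucont by (intro continuous_intros)
  show "continuous_on UNIV (\<lambda>x. - v i x)" for i using vcont by (intro continuous_intros)
qed

section \<open>Coupling matrices with nonpositive off-diagonal entries\<close>

lemma coupling_ge_at_max:
  fixes A :: "'m::finite \<Rightarrow> 'm \<Rightarrow> real"
  assumes off: "\<And>j. j \<noteq> i \<Longrightarrow> A i j \<le> 0" and le: "\<And>j. r j \<le> r i"
  shows "r i * (\<Sum>j\<in>UNIV. A i j) \<le> (\<Sum>j\<in>UNIV. A i j * r j)"
proof -
  have "r i * (\<Sum>j\<in>UNIV. A i j) = (\<Sum>j\<in>UNIV. A i j * r i)"
    by (simp add: sum_distrib_left mult.commute)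
  also have "\<dots> \<le> (\<Sum>j\<in>UNIV. A i j * r j)"
  proof (rule sum_mono)
    fix j show "A i j * r i \<le> A i j * r j"
      by (cases "j = i") (auto intro: mult_left_mono_neg off le)
  qed
  finally show ?thesis .
qed

lemma coupling_le_at_min:
  fixes A :: "'m::finite \<Rightarrow> 'm \<Rightarrow> real"
  assumes off: "\<And>j. j \<noteq> i \<Longrightarrow> A i j \<le> 0" and le: "\<And>j. r i \<le> r j"
  shows "(\<Sum>j\<in>UNIV. A i j * r j) \<le> r i * (\<Sum>j\<in>UNIV. A i j)"
  using coupling_ge_at_max[of i A "\<lambda>j. - r j"] off le by (simp add: sum_negf)

text \<open>For an irreducible matrix with nonpositive off-diagonal entries and nonnegative row
  sums, a kernel vector with positive maximum is constant: the set of maximal indices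
  cannot be left along a nonzero entry.\<close>
lemma kernel_vector_positive_max_constant:
  fixes A :: "'m::finite \<Rightarrow> 'm \<Rightarrow> real"
  assumes ker: "\<And>i. (\<Sum>j\<in>UNIV. A i j * c j) = 0"
    and off: "\<And>i j. i \<noteq> j \<Longrightarrow> A i j \<le> 0" and rows: "\<And>i. (\<Sum>j\<in>UNIV. A i j) \<ge> 0"
    and irr: "irreducible_mat A" and pos: "c i0 > 0" and mx: "\<And>j. c j \<le> c i0"
  shows "c j = c i0"
proof (rule ccontr)
  assume ne: "c j \<noteq> c i0"
  define I where "I = {j. c j = c i0}"
  have "I \<noteq> {}" "I \<noteq> UNIV" unfolding I_def using ne by auto
  then obtain i k where ik: "i \<in> I" "k \<notin> I" "A i k \<noteq> 0" using irr unfolding irreducible_mat_def by blast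
  have ci: "c i = c i0" using ik(1) unfolding I_def by simp
  have ck: "c k < c i" using ik(2) mx[of k] ci unfolding I_def by simp
  have "i \<noteq> k" using ik by auto
  then have dk: "A i k < 0" using off[of i k] ik(3) by simp
  have terms: "0 \<le> A i l * (c l - c i)" for l
  proof (cases "l = i")
    case False
    then show ?thesis using off[of i l] mx[of l] ci by (intro mult_nonpos_nonpos) auto
  qed simp
  have "A i k * (c k - c i) \<le> (\<Sum>l\<in>UNIV. A i l * (c l - c i))"
    by (rule member_le_sum) (use terms in auto)
  moreover have "0 < A i k * (c k - c i)" using dk ck by (simp add: mult_neg_neg)
  moreover have "(\<Sum>l\<in>UNIV. A i l * (c l - c i)) = (\<Sum>l\<in>UNIV. A i l * c l) - c i * (\<Sum>l\<in>UNIV. A i l)"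
    by (simp add: algebra_simps sum_subtractf sum_distrib_left)
  moreover have "c i * (\<Sum>l\<in>UNIV. A i l) \<ge> 0" using rows[of i] pos ci by simp
  ultimately show False using ker[of i] by linarith
qed

text \<open>A kernel vector is constant: apply the previous lemma to c or to -c, unless c = 0.\<close>
lemma kernel_vector_constant:
  fixes A :: "'m::finite \<Rightarrow> 'm \<Rightarrow> real"
  assumes ker: "\<And>i. (\<Sum>j\<in>UNIV. A i j * c j) = 0"
    and off: "\<And>i j. i \<noteq> j \<Longrightarrow> A i j \<le> 0" and rows: "\<And>i. (\<Sum>j\<in>UNIV. A i j) \<ge> 0"
    and irr: "irreducible_mat A"
  shows "\<exists>t. c = (\<lambda>i. t)"
proof -
  obtain i0 where i0: "\<And>j. c j \<le> c i0" using finite_index_attains_max[of c] by blast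
  obtain i1 where i1: "\<And>j. - c j \<le> - c i1" using finite_index_attains_max[of "\<lambda>j. - c j"] by blast
  have ker_neg: "\<And>i. (\<Sum>j\<in>UNIV. A i j * - c j) = 0" using ker by (simp add: sum_negf)
  consider "c i0 > 0" | "- c i1 > 0" | "c i0 \<le> 0" "c i1 \<ge> 0" by linarith
  then show ?thesis
  proof cases
    case 1
    have "c = (\<lambda>i. c i0)"
      by (rule ext) (rule kernel_vector_positive_max_constant[OF ker off rows irr 1 i0])
    then show ?thesis by (rule exI)
  next
    case 2
    have "c = (\<lambda>i. c i1)"
    proof
      show "c j = c i1" for j
        using kernel_vector_positive_max_constant[OF ker_neg off rows irr 2 i1, of j] by simp
    qed
    then show ?thesis by (rule exI)
  next
    case 3
    have "c = (\<lambda>i. 0)"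
    proof
      show "c j = 0" for j using i0[of j] i1[of j] 3 by linarith
    qed
    then show ?thesis by (rule exI)
  qed
qed

section \<open>Compactness of equi-Lipschitz periodic families\<close>

text \<open>Arzela-Ascoli on the unit cube, transported to the torus by periodicity.\<close>
lemma periodic_equilipschitz_convergent_subsequence:
  fixes U :: "nat \<Rightarrow> 'm::finite \<Rightarrow> real^'n \<Rightarrow> real"
  assumes bound: "\<And>k i x. \<bar>U k i x\<bar> \<le> C"
    and lip: "\<And>k i. L-lipschitz_on UNIV (U k i)" and per: "\<And>k i. torus_periodic (U k i)"
  obtains r v where "strict_mono r" "\<And>i. uniform_limit UNIV (\<lambda>k. U (r k) i) (v i) sequentially"
proof -
  define V where "V = (\<lambda>k x. (\<chi> i. U k i x) :: real^'m)"
  have L: "L \<ge> 0" using lip lipschitz_on_nonneg by blast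
  have V_lip: "dist (V k x) (V k y) \<le> real CARD('m) * L * dist x y" for k x y
  proof -
    have "dist (V k x) (V k y) \<le> (\<Sum>i\<in>UNIV. \<bar>(V k x - V k y) $ i\<bar>)"
      unfolding dist_norm by (rule norm_le_l1_cart)
    also have "\<dots> \<le> (\<Sum>i\<in>(UNIV::'m set). L * dist x y)"
    proof (rule sum_mono)
      fix i
      have "dist (U k i x) (U k i y) \<le> L * dist x y" using lipschitz_onD[OF lip] by blast
      then show "\<bar>(V k x - V k y) $ i\<bar> \<le> L * dist x y" by (simp add: V_def dist_real_def)
    qed
    finally show ?thesis by simp
  qed
  obtain g r where "continuous_on (cbox 0 1) g" and r: "strict_mono (r :: nat \<Rightarrow> nat)"
    and conv: "\<And>e. 0 < e \<Longrightarrow> \<exists>N. \<forall>n x. n \<ge> N \<and> x \<in> cbox 0 1 \<longrightarrow> norm (V (r n) x - g x) < e"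
  proof (rule Arzela_Ascoli[of "cbox (0::real^'n) 1" V "real CARD('m) * C"])
    show "compact (cbox (0::real^'n) 1)" by simp
    show "norm (V n x) \<le> real CARD('m) * C" for n x
    proof -
      have "norm (V n x) \<le> (\<Sum>i\<in>UNIV. \<bar>V n x $ i\<bar>)" by (rule norm_le_l1_cart)
      also have "\<dots> \<le> (\<Sum>i\<in>(UNIV::'m set). C)" by (rule sum_mono) (use bound in \<open>simp add: V_def\<close>)
      finally show ?thesis by simp
    qed
    show "\<exists>dl>0. \<forall>n y. y \<in> cbox 0 1 \<and> norm (x - y) < dl \<longrightarrow> norm (V n x - V n y) < e"
      if e: "0 < e" for x e
    proof (intro exI conjI allI impI)
      define M where "M = real CARD('m) * L"
      have M: "M \<ge> 0" unfolding M_def using L by simp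
      show "e / (M + 1) > 0" using e M by simp
      fix n y assume "y \<in> cbox 0 1 \<and> norm (x - y) < e / (M + 1)"
      then have "M * norm (x - y) \<le> M * (e / (M + 1))" using M by (intro mult_left_mono) auto
      also have "\<dots> < e" using e M by (simp add: field_simps)
      finally show "norm (V n x - V n y) < e" using V_lip[of n x y] unfolding M_def dist_norm by simp
    qed
  qed blast
  define v where "v = (\<lambda>i x. g (torus_rep 0 x) $ i)"
  have "uniform_limit UNIV (\<lambda>k. U (r k) i) (v i) sequentially" for i
    unfolding uniform_limit_sequentially_iff
  proof (intro allI impI)
    fix e :: real assume "e > 0"
    then obtain N where N: "\<forall>n x. n \<ge> N \<and> x \<in> cbox 0 1 \<longrightarrow> norm (V (r n) x - g x) < e"
      using conv by blast
    have "dist (U (r n) i x) (v i x) < e" if "n \<ge> N" for n x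
    proof -
      have "dist (U (r n) i x) (v i x) = \<bar>(V (r n) (torus_rep 0 x) - g (torus_rep 0 x)) $ i\<bar>"
        unfolding v_def V_def dist_real_def by (simp add: periodic_torus_rep[OF per])
      also have "\<dots> \<le> norm (V (r n) (torus_rep 0 x) - g (torus_rep 0 x))" by (rule component_le_norm_cart)
      also have "\<dots> < e" using N that torus_rep_in_unit_cube by blast
      finally show ?thesis .
    qed
    then show "\<exists>N. \<forall>n\<ge>N. \<forall>x\<in>UNIV. dist (U (r n) i x) (v i x) < e" by blast
  qed
  then show thesis using that r by blast
qed

lemma lipschitz_on_pointwise_limit:
  fixes u :: "nat \<Rightarrow> 'a::metric_space \<Rightarrow> real"
  assumes lim: "\<And>x. (\<lambda>k. u k x) \<longlonglongrightarrow> v x" and lip: "\<And>k. L-lipschitz_on S (u k)" and L: "L \<ge> 0"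
  shows "L-lipschitz_on S v"
proof (rule lipschitz_onI)
  fix x y assume "x \<in> S" "y \<in> S"
  then have "\<forall>k. dist (u k x) (u k y) \<le> L * dist x y" using lip lipschitz_onD by blast
  moreover have "(\<lambda>k. dist (u k x) (u k y)) \<longlonglongrightarrow> dist (v x) (v y)" by (intro tendsto_dist lim)
  ultimately show "dist (v x) (v y) \<le> L * dist x y" by (intro LIMSEQ_le_const2) auto
qed (rule L)

lemma torus_periodic_pointwise_limit:
  fixes u :: "nat \<Rightarrow> real^'n \<Rightarrow> real"
  assumes lim: "\<And>x. (\<lambda>k. u k x) \<longlonglongrightarrow> v x" and per: "\<And>k. torus_periodic (u k)"
  shows "torus_periodic v"
  unfolding torus_periodic_def
proof (intro allI impI)
  fix x z :: "real^'n" assume "int_vec z"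
  then have "(\<lambda>k. u k x) \<longlonglongrightarrow> v (x + z)" using lim[of "x + z"] per unfolding torus_periodic_def by simp
  then show "v (x + z) = v x" using lim[of x] by (rule LIMSEQ_unique)
qed

lemma uniform_limit_vanishing_times_bounded:
  fixes u :: "nat \<Rightarrow> 'a \<Rightarrow> real"
  assumes l: "l \<longlonglongrightarrow> 0" and bound: "\<And>k x. \<bar>u k x\<bar> \<le> C"
  shows "uniform_limit UNIV (\<lambda>k x. - l k * u k x) (\<lambda>x. 0) sequentially"
  unfolding uniform_limit_sequentially_iff
proof (intro allI impI)
  fix e :: real assume e: "e > 0"
  have C: "C \<ge> 0" using bound[of 0] by (meson abs_ge_zero order_trans)
  obtain N where N: "\<And>n. n \<ge> N \<Longrightarrow> \<bar>l n\<bar> < e / (C + 1)"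
    using LIMSEQ_D[OF l, of "e / (C + 1)"] e C by auto
  have "dist (- l n * u n x) 0 < e" if "n \<ge> N" for n x
  proof -
    have "dist (- l n * u n x) 0 = \<bar>l n\<bar> * \<bar>u n x\<bar>" by (simp add: abs_mult)
    also have "\<dots> \<le> \<bar>l n\<bar> * (C + 1)" using bound[of n x] by (intro mult_left_mono) auto
    also have "\<dots> < e" using N[OF that] C by (simp add: field_simps)
    finally show ?thesis .
  qed
  then show "\<exists>N. \<forall>n\<ge>N. \<forall>x\<in>UNIV. dist (- l n * u n x) 0 < e" by blast
qed

section \<open>A priori estimates for the weakly coupled system\<close>

text \<open>The structural hypotheses used by the estimates: (H0) continuity and periodicity of
  the data, the parts of (H1) on F_i except convexity, (H2), and (H3) without the sign of
  the diagonal.\<close>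
locale weakly_coupled_system =
  fixes F :: "'m::finite \<Rightarrow> real^'n \<Rightarrow> real^'n \<Rightarrow> real"
    and f :: "'m \<Rightarrow> real^'n \<Rightarrow> real"
    and d :: "real^'n \<Rightarrow> 'm \<Rightarrow> 'm \<Rightarrow> real"
  assumes H0_f: "\<And>i. continuous_on UNIV (f i) \<and> torus_periodic (f i)"
    and H0_F: "\<And>i. continuous_on UNIV (\<lambda>(x, p). F i x p)"
    and H1_coercive: "\<And>i M. \<exists>R. \<forall>x p. norm p \<ge> R \<longrightarrow> F i x p \<ge> M"
    and H1_nonneg: "\<And>i x p. F i x p \<ge> 0"
    and H1_zero: "\<And>i x. F i x 0 = 0"
    and H2: "\<And>i x. f i x \<ge> 0"
    and H3_cont: "\<And>i j. continuous_on UNIV (\<lambda>x. d x i j) \<and> torus_periodic (\<lambda>x. d x i j)"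
    and H3_off: "\<And>i j x. i \<noteq> j \<Longrightarrow> d x i j \<le> 0"
    and H3_rows: "\<And>i x. (\<Sum>j\<in>UNIV. d x i j) \<ge> 0"
begin

lemma F_large_outside_ball: "\<exists>R>0. \<forall>i x p. norm p \<ge> R \<longrightarrow> F i x p \<ge> M"
proof -
  obtain R where R: "\<And>i. \<forall>x p. norm p \<ge> R i \<longrightarrow> F i x p \<ge> M" using H1_coercive by metis
  define R0 where "R0 = (\<Sum>i\<in>UNIV. \<bar>R i\<bar>) + 1"
  have "R i \<le> R0" for i
    using member_le_sum[of i UNIV "\<lambda>i. \<bar>R i\<bar>"] unfolding R0_def by auto
  moreover have "R0 > 0" unfolding R0_def by (smt (verit) sum_nonneg abs_ge_zero)
  ultimately show ?thesis using R by (meson order_trans)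
qed

lemma steep_cone_localizes:
  "\<exists>K>0. \<forall>i x e z. 0 < e \<longrightarrow> F i x (smooth_cone_grad K e z x) \<le> M \<longrightarrow> norm (x - z) < e"
proof -
  obtain R where R: "R > 0" "\<And>i x p. norm p \<ge> R \<Longrightarrow> F i x p \<ge> M + 1"
    using F_large_outside_ball[of "M + 1"] by blast
  have "norm (x - z) < e"
    if "0 < e" "F i x (smooth_cone_grad (2 * R) e z x) \<le> M" for i x e z
  proof (rule smooth_cone_grad_small_near_vertex)
    show "norm (smooth_cone_grad (2 * R) e z x) < 2 * R / 2"
      using R(2)[of "smooth_cone_grad (2 * R) e z x" i x] that by force
  qed (use R that in auto)
  then show ?thesis using R by (intro exI[of _ "2 * R"]) auto
qed

lemma f_bounded_above: "\<exists>Mf. \<forall>i x. f i x \<le> Mf"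
proof -
  have "\<forall>i. \<exists>B. \<forall>x. \<bar>f i x\<bar> \<le> B" using periodic_bounded H0_f by blast
  then obtain B where B: "\<And>i x. \<bar>f i x\<bar> \<le> B i" by metis
  have "f i x \<le> (\<Sum>i\<in>UNIV. B i)" for i x
  proof -
    have "B i \<le> (\<Sum>i\<in>UNIV. B i)"
      by (rule member_le_sum) (use B in \<open>auto intro: order_trans[OF abs_ge_zero]\<close>)
    moreover have "f i x \<le> B i" using B[of i x] by linarith
    ultimately show ?thesis by linarith
  qed
  then show ?thesis by blast
qed

lemma d_bounded: "\<exists>Md. \<forall>i j x. \<bar>d x i j\<bar> \<le> Md"
proof -
  have "\<forall>i j. \<exists>B. \<forall>x. \<bar>d x i j\<bar> \<le> B" using periodic_bounded H3_cont by blast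
  then obtain B where B: "\<And>i j x. \<bar>d x i j\<bar> \<le> B i j" by metis
  have B0: "B i j \<ge> 0" for i j using B[of _ i j] by (meson abs_ge_zero order_trans)
  have "\<bar>d x i j\<bar> \<le> (\<Sum>i\<in>UNIV. \<Sum>j\<in>UNIV. B i j)" for i j x
  proof -
    have "B i j \<le> (\<Sum>j\<in>UNIV. B i j)" by (rule member_le_sum) (use B0 in auto)
    also have "\<dots> \<le> (\<Sum>i\<in>UNIV. \<Sum>j\<in>UNIV. B i j)"
      by (rule member_le_sum) (use B0 in \<open>auto intro: sum_nonneg\<close>)
    finally show ?thesis using B[of x i j] by linarith
  qed
  then show ?thesis by blast
qed

lemma f_le_sum: "f i x \<le> (\<Sum>j\<in>UNIV. f j x)"
  by (rule member_le_sum) (use H2 in auto)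

lemma sum_f_small_near_zero:
  assumes z: "(\<Sum>j\<in>UNIV. f j z) = 0" and eps: "eps > 0"
  shows "\<exists>dl>0. \<forall>y. dist y z < dl \<longrightarrow> (\<Sum>j\<in>UNIV. f j y) < eps"
proof -
  have "continuous_on UNIV (\<lambda>x. \<Sum>j\<in>UNIV. f j x)" using H0_f by (intro continuous_on_sum) auto
  then obtain dl where dl: "dl > 0"
    and close: "\<forall>y. dist y z < dl \<longrightarrow> dist (\<Sum>j\<in>UNIV. f j y) (\<Sum>j\<in>UNIV. f j z) < eps"
    using eps unfolding continuous_on_iff by blast
  have "(\<Sum>j\<in>UNIV. f j y) < eps" if "dist y z < dl" for y
  proof -
    have "\<bar>\<Sum>j\<in>UNIV. f j y\<bar> < eps" using close[rule_format, OF that] z by (simp add: dist_real_def)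
    then show ?thesis by linarith
  qed
  then show ?thesis using dl by blast
qed

text \<open>(1) Solutions of the discounted system are nonnegative: at a global minimum the
  supersolution inequality with a constant test function forces lam u_k >= f_k >= 0.\<close>
lemma discounted_solution_nonneg:
  assumes lam: "lam > 0" and sol: "visc_sol (discounted_op lam F f d) u"
  shows "u i x \<ge> 0"
proof -
  have cp: "\<And>i. continuous_on UNIV (u i) \<and> torus_periodic (u i)" using sol unfolding visc_sol_def by blast
  obtain k x0 where mn: "\<And>j x. u k x0 \<le> u j x" using system_attains_min[of u, OF cp] by blast
  have "0 \<le> discounted_op lam F f d k x0 (\<lambda>j. u j x0) 0"
    using sol mn unfolding visc_sol_def
    by (intro supersol_at_global_min[where G = "discounted_op lam F f d"]) auto
  moreover have "(\<Sum>j\<in>UNIV. d x0 k j * u j x0) \<le> u k x0 * (\<Sum>j\<in>UNIV. d x0 k j)"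
    by (rule coupling_le_at_min[where A = "d x0"]) (use H3_off mn in auto)
  ultimately have ineq: "0 \<le> lam * u k x0 - f k x0 + u k x0 * (\<Sum>j\<in>UNIV. d x0 k j)"
    unfolding discounted_op_def using H1_zero[of k x0] by linarith
  have "u k x0 \<ge> 0"
  proof (rule ccontr)
    assume neg: "\<not> u k x0 \<ge> 0"
    then have "u k x0 * (\<Sum>j\<in>UNIV. d x0 k j) \<le> 0"
      using H3_rows[of x0 k] by (simp add: mult_nonpos_nonneg)
    moreover have "lam * u k x0 < 0" using neg lam by (simp add: mult_pos_neg)
    ultimately show False using ineq H2[of k x0] by linarith
  qed
  then show ?thesis using mn[of i x] by linarith
qed

text \<open>At a maximum of u - cone the subsolution inequality
  bounds F_k at the cone gradient, so the maximum point is close to z, where lam u_k is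
  controlled by sum_i f_i.\<close>
lemma discounted_solution_cone_bound:
  "\<exists>K>0. \<forall>lam u z i x. 0 < lam \<longrightarrow> visc_sol (discounted_op lam F f d) u \<longrightarrow>
      (\<Sum>j\<in>UNIV. f j z) = 0 \<longrightarrow> u i x \<le> K * norm (x - z)"
proof -
  obtain Mf where Mf: "\<And>i x. f i x \<le> Mf" using f_bounded_above by blast
  obtain K where K: "K > 0"
    and near: "\<And>i x e z. 0 < e \<Longrightarrow> F i x (smooth_cone_grad K e z x) \<le> Mf \<Longrightarrow> norm (x - z) < e"
    using steep_cone_localizes[of Mf] by blast
  have "u i x \<le> K * norm (x - z)"
    if lam: "0 < lam" and sol: "visc_sol (discounted_op lam F f d) u" and z: "(\<Sum>j\<in>UNIV. f j z) = 0"
    for lam u z i x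
  proof (rule field_le_epsilon)
    fix t :: real assume t: "t > 0"
    have cp: "\<And>i. continuous_on UNIV (u i) \<and> torus_periodic (u i)" using sol unfolding visc_sol_def by blast
    have u0: "\<And>i x. u i x \<ge> 0" using discounted_solution_nonneg lam sol by blast
    define eta where "eta = t / (K + 1)"
    have eta: "eta > 0" unfolding eta_def using t K by simp
    have "(K + 1) * eta = t" unfolding eta_def using K by simp
    then have eta_sum: "K * eta + eta = t" by (simp add: algebra_simps)
    obtain dl where dl: "dl > 0" "\<And>y. dist y z < dl \<Longrightarrow> (\<Sum>j\<in>UNIV. f j y) < lam * eta"
      using sum_f_small_near_zero[OF z, of "lam * eta"] lam eta by auto
    define e where "e = min dl eta"
    have e: "e > 0" "e \<le> dl" "e \<le> eta" unfolding e_def using dl eta by auto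
    obtain k x0 where mx: "\<And>j x. u j x - smooth_cone K e z x \<le> u k x0 - smooth_cone K e z x0"
      using system_minus_cone_attains_max[of u, OF cp K] by blast
    have "discounted_op lam F f d k x0 (\<lambda>j. u j x0) (smooth_cone_grad K e z x0) \<le> 0"
      using sol mx unfolding visc_sol_def
      by (intro subsol_at_global_max[where G = "discounted_op lam F f d", OF _ C1_test_cone[OF e(1)]]) auto
    moreover have "u k x0 * (\<Sum>j\<in>UNIV. d x0 k j) \<le> (\<Sum>j\<in>UNIV. d x0 k j * u j x0)"
      by (rule coupling_ge_at_max[where A = "d x0"]) (use H3_off mx[of _ x0] in auto)
    moreover have "u k x0 * (\<Sum>j\<in>UNIV. d x0 k j) \<ge> 0" using u0 H3_rows by simp
    ultimately have ineq: "lam * u k x0 + F k x0 (smooth_cone_grad K e z x0) \<le> f k x0"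
      unfolding discounted_op_def by linarith
    then have "F k x0 (smooth_cone_grad K e z x0) \<le> Mf"
      using Mf[of k x0] u0[of k x0] lam by (smt (verit) mult_nonneg_nonneg)
    then have "norm (x0 - z) < e" by (rule near[OF e(1)])
    then have "dist x0 z < dl" using e by (simp add: dist_norm)
    then have "(\<Sum>j\<in>UNIV. f j x0) < lam * eta" by (rule dl(2))
    then have "lam * u k x0 < lam * eta"
      using ineq f_le_sum[of k x0] H1_nonneg[of k x0 "smooth_cone_grad K e z x0"] by linarith
    then have uk: "u k x0 < eta" using lam by simp
    have "u i x \<le> smooth_cone K e z x + (u k x0 - smooth_cone K e z x0)" using mx[of i x] by simp
    also have "\<dots> \<le> K * (norm (x - z) + e) + eta"
      using cone_upper[of K e z x] cone_nonneg[of K e z x0] K e uk by simp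
    also have "\<dots> \<le> K * norm (x - z) + K * eta + eta" using e K by (simp add: algebra_simps)
    finally show "u i x \<le> K * norm (x - z) + t" using eta_sum by linarith
  qed
  then show ?thesis using K by blast
qed

lemma discounted_solution_vanishes_on_zero_set:
  assumes "lam > 0" "visc_sol (discounted_op lam F f d) u" "(\<Sum>j\<in>UNIV. f j z) = 0"
  shows "u i z = 0"
proof -
  obtain K where "\<And>lam u z i x. 0 < lam \<Longrightarrow> visc_sol (discounted_op lam F f d) u \<Longrightarrow>
      (\<Sum>j\<in>UNIV. f j z) = 0 \<Longrightarrow> u i x \<le> K * norm (x - z)"
    using discounted_solution_cone_bound by blast
  from this[OF assms, of i z] discounted_solution_nonneg[OF assms(1,2), of i z] show ?thesis by simp
qed

text \<open>Hence, if the zero set is nonempty, the solutions are bounded uniformly in lam: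
  every point has a representative within distance N of x*.\<close>
lemma discounted_solution_bounded:
  assumes xsF: "(\<Sum>j\<in>UNIV. f j xs) = 0"
  shows "\<exists>C. \<forall>lam u i x. 0 < lam \<longrightarrow> visc_sol (discounted_op lam F f d) u \<longrightarrow> 0 \<le> u i x \<and> u i x \<le> C"
proof -
  obtain K where K: "K > 0" "\<And>lam u z i x. 0 < lam \<Longrightarrow> visc_sol (discounted_op lam F f d) u \<Longrightarrow>
      (\<Sum>j\<in>UNIV. f j z) = 0 \<Longrightarrow> u i x \<le> K * norm (x - z)"
    using discounted_solution_cone_bound by blast
  have "0 \<le> u i x \<and> u i x \<le> K * real CARD('n)"
    if lam: "0 < lam" and sol: "visc_sol (discounted_op lam F f d) u" for lam u i x
  proof
    show "0 \<le> u i x" using discounted_solution_nonneg lam sol by blast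
    have "u i x = u i (torus_rep xs x)"
      using periodic_torus_rep sol unfolding visc_sol_def by metis
    also have "\<dots> \<le> K * norm (torus_rep xs x - xs)" using K(2)[OF lam sol xsF] by blast
    also have "\<dots> \<le> K * real CARD('n)" using K(1) norm_torus_rep_le by simp
    finally show "u i x \<le> K * real CARD('n)" .
  qed
  then show ?thesis by blast
qed

text \<open>(3) Uniform Lipschitz bound: at a local maximum of u_i - phi the subsolution
  inequality bounds F_i at D phi, hence |D phi| by coercivity.\<close>
lemma discounted_solution_lipschitz:
  assumes xsF: "(\<Sum>j\<in>UNIV. f j xs) = 0"
  shows "\<exists>L. \<forall>lam u i. 0 < lam \<longrightarrow> visc_sol (discounted_op lam F f d) u \<longrightarrow> L-lipschitz_on UNIV (u i)"
proof -
  obtain C where C: "\<And>lam u i x. 0 < lam \<Longrightarrow> visc_sol (discounted_op lam F f d) u \<Longrightarrow>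
     0 \<le> u i x \<and> u i x \<le> C" using discounted_solution_bounded[OF xsF] by blast
  obtain Mf where Mf: "\<And>i x. f i x \<le> Mf" using f_bounded_above by blast
  obtain Md where Md: "\<And>i j x. \<bar>d x i j\<bar> \<le> Md" using d_bounded by blast
  define M where "M = Mf + real CARD('m) * (Md * C) + 1"
  obtain R where R: "R > 0" "\<And>i x p. norm p \<ge> R \<Longrightarrow> F i x p \<ge> M"
    using F_large_outside_ball[of M] by blast
  have "(2*R)-lipschitz_on UNIV (u i)"
    if lam: "0 < lam" and sol: "visc_sol (discounted_op lam F f d) u" for lam u i
  proof (rule lipschitz_of_gradient_bound)
    show "continuous_on UNIV (u i)" "torus_periodic (u i)" using sol unfolding visc_sol_def by auto
    fix x0 \<phi> D\<phi>
    assume "C1_test \<phi> D\<phi>" "loc_max_at (\<lambda>y. u i y - \<phi> y) x0"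
    then have "discounted_op lam F f d i x0 (\<lambda>j. u j x0) (D\<phi> x0) \<le> 0"
      using sol unfolding visc_sol_def visc_subsol_def by blast
    then have A: "lam * u i x0 + (F i x0 (D\<phi> x0) - f i x0) + (\<Sum>j\<in>UNIV. d x0 i j * u j x0) \<le> 0"
      unfolding discounted_op_def .
    have "\<bar>\<Sum>j\<in>UNIV. d x0 i j * u j x0\<bar> \<le> (\<Sum>j\<in>UNIV. \<bar>d x0 i j\<bar> * \<bar>u j x0\<bar>)"
      by (simp add: sum_abs[THEN order_trans] abs_mult)
    also have "\<dots> \<le> (\<Sum>j\<in>(UNIV::'m set). Md * C)"
      by (rule sum_mono, rule mult_mono) (use Md C[OF lam sol] in \<open>auto intro: order_trans[OF abs_ge_zero]\<close>)
    finally have "- (\<Sum>j\<in>UNIV. d x0 i j * u j x0) \<le> real CARD('m) * (Md * C)" by simp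
    moreover have "lam * u i x0 \<ge> 0" using C[OF lam sol, of i x0] lam by simp
    ultimately have "F i x0 (D\<phi> x0) < M" using A Mf[of i x0] unfolding M_def by linarith
    then show "norm (D\<phi> x0) < R" using R(2)[of "D\<phi> x0" i x0] by force
  qed (use R in simp)
  then show ?thesis by blast
qed

text \<open>If c = (t,...,t) is in the kernel of every D(x) with
  t nonzero, all row sums of D vanish; a minimum argument then gives t <= 0 and a cone
  argument at a zero of sum_i f_i gives t >= 0.\<close>
lemma ergodic_constant_nonpos:
  assumes rows0: "\<And>x i. (\<Sum>j\<in>UNIV. d x i j) = 0"
    and sol: "visc_sol (ergodic_op (\<lambda>i. t) F f d) w"
  shows "t \<le> 0"
proof -
  have cp: "\<And>i. continuous_on UNIV (w i) \<and> torus_periodic (w i)" using sol unfolding visc_sol_def by blast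
  obtain k x0 where mn: "\<And>j x. w k x0 \<le> w j x" using system_attains_min[of w, OF cp] by blast
  have "0 \<le> ergodic_op (\<lambda>i. t) F f d k x0 (\<lambda>j. w j x0) 0"
    using sol mn unfolding visc_sol_def
    by (intro supersol_at_global_min[where G = "ergodic_op (\<lambda>i. t) F f d"]) auto
  moreover have "(\<Sum>j\<in>UNIV. d x0 k j * w j x0) \<le> w k x0 * (\<Sum>j\<in>UNIV. d x0 k j)"
    by (rule coupling_le_at_min[where A = "d x0"]) (use H3_off mn in auto)
  ultimately show ?thesis
    unfolding ergodic_op_def using rows0 H1_zero[of k x0] H2[of k x0] by simp
qed

lemma ergodic_constant_nonneg:
  assumes rows0: "\<And>x i. (\<Sum>j\<in>UNIV. d x i j) = 0" and xsF: "(\<Sum>j\<in>UNIV. f j xs) = 0"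
    and sol: "visc_sol (ergodic_op (\<lambda>i. t) F f d) w"
  shows "t \<ge> 0"
proof (rule ccontr)
  assume "\<not> t \<ge> 0"
  then have tneg: "t < 0" by simp
  have cp: "\<And>i. continuous_on UNIV (w i) \<and> torus_periodic (w i)" using sol unfolding visc_sol_def by blast
  obtain Mf where Mf: "\<And>i x. f i x \<le> Mf" using f_bounded_above by blast
  obtain K where K: "K > 0"
    and near: "\<And>i x e z. 0 < e \<Longrightarrow> F i x (smooth_cone_grad K e z x) \<le> Mf \<Longrightarrow> norm (x - z) < e"
    using steep_cone_localizes[of Mf] by blast
  obtain dl where dl: "dl > 0" "\<And>y. dist y xs < dl \<Longrightarrow> (\<Sum>j\<in>UNIV. f j y) < - t"
    using sum_f_small_near_zero[OF xsF, of "- t"] tneg by auto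
  obtain k x0 where mx: "\<And>j x. w j x - smooth_cone K dl xs x \<le> w k x0 - smooth_cone K dl xs x0"
    using system_minus_cone_attains_max[of w, OF cp K] by blast
  have "ergodic_op (\<lambda>i. t) F f d k x0 (\<lambda>j. w j x0) (smooth_cone_grad K dl xs x0) \<le> 0"
    using sol mx unfolding visc_sol_def
    by (intro subsol_at_global_max[where G = "ergodic_op (\<lambda>i. t) F f d", OF _ C1_test_cone[OF dl(1)]]) auto
  moreover have "w k x0 * (\<Sum>j\<in>UNIV. d x0 k j) \<le> (\<Sum>j\<in>UNIV. d x0 k j * w j x0)"
    by (rule coupling_ge_at_max[where A = "d x0"]) (use H3_off mx[of _ x0] in auto)
  ultimately have ineq: "F k x0 (smooth_cone_grad K dl xs x0) \<le> f k x0 + t"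
    unfolding ergodic_op_def using rows0 by simp
  then have "F k x0 (smooth_cone_grad K dl xs x0) \<le> Mf" using Mf[of k x0] tneg by linarith
  then have "norm (x0 - xs) < dl" by (rule near[OF dl(1)])
  then have "dist x0 xs < dl" by (simp add: dist_norm)
  then have "(\<Sum>j\<in>UNIV. f j x0) < - t" by (rule dl(2))
  then have "f k x0 < - t" using f_le_sum[of k x0] by linarith
  then show False using ineq H1_nonneg[of k x0 "smooth_cone_grad K dl xs x0"] by linarith
qed

lemma ergodic_constant_unique:
  assumes irred: "\<And>x. irreducible_mat (d x)" and xsF: "(\<Sum>j\<in>UNIV. f j xs) = 0"
    and ker: "in_ker_all d c" and sol: "visc_sol (ergodic_op c F f d) w"
  shows "c = (\<lambda>i. 0)"
proof -
  have "\<And>i. (\<Sum>j\<in>UNIV. d xs i j * c j) = 0" using ker unfolding in_ker_all_def by blast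
  then obtain t where ct: "c = (\<lambda>i. t)"
    using kernel_vector_constant[of "d xs", OF _ H3_off H3_rows irred] by blast
  show ?thesis
  proof (cases "t = 0")
    case False
    have "(\<Sum>j\<in>UNIV. d x i j) * t = 0" for x i
      using ker unfolding in_ker_all_def ct by (simp add: sum_distrib_right)
    then have rows0: "(\<Sum>j\<in>UNIV. d x i j) = 0" for x i using False by simp
    have "t \<le> 0" using ergodic_constant_nonpos[OF rows0] sol unfolding ct .
    moreover have "t \<ge> 0" using ergodic_constant_nonneg[OF rows0 xsF] sol unfolding ct .
    ultimately show ?thesis using False by simp
  qed (simp add: ct)
qed

lemma discounted_op_tendsto_ergodic_op:
  assumes l: "l \<longlonglongrightarrow> 0" and xk: "xk \<longlonglongrightarrow> x0" and rk: "\<And>j. (\<lambda>k. rk k j) \<longlonglongrightarrow> r j"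
    and pk: "pk \<longlonglongrightarrow> p"
  shows "(\<lambda>k. discounted_op (l k) F f d i (xk k) (rk k) (pk k)) \<longlonglongrightarrow> ergodic_op (\<lambda>i. 0) F f d i x0 r p"
proof -
  have "isCont (\<lambda>(x, p). F i x p) (x0, p)" using H0_F[of i] by (simp add: continuous_on_eq_continuous_at)
  then have "(\<lambda>k. (\<lambda>(x, p). F i x p) (xk k, pk k)) \<longlonglongrightarrow> (\<lambda>(x, p). F i x p) (x0, p)"
    using tendsto_Pair[OF xk pk] by (rule isCont_tendsto_compose)
  then have F_lim: "(\<lambda>k. F i (xk k) (pk k)) \<longlonglongrightarrow> F i x0 p" by simp
  have "isCont (f i) x0" using H0_f[of i] by (simp add: continuous_on_eq_continuous_at)
  then have f_lim: "(\<lambda>k. f i (xk k)) \<longlonglongrightarrow> f i x0" using xk by (rule isCont_tendsto_compose)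
  have d_lim: "(\<lambda>k. d (xk k) i j) \<longlonglongrightarrow> d x0 i j" for j
  proof -
    have "isCont (\<lambda>x. d x i j) x0" using H3_cont[of i j] by (simp add: continuous_on_eq_continuous_at)
    then show ?thesis using xk by (rule isCont_tendsto_compose)
  qed
  have "(\<lambda>k. l k * rk k i + (F i (xk k) (pk k) - f i (xk k)) + (\<Sum>j\<in>UNIV. d (xk k) i j * rk k j))
      \<longlonglongrightarrow> 0 * r i + (F i x0 p - f i x0) + (\<Sum>j\<in>UNIV. d x0 i j * r j)"
    by (intro tendsto_intros l rk F_lim f_lim d_lim)
  then show ?thesis unfolding discounted_op_def ergodic_op_def by simp
qed

lemma vanishing_discount_limit:
  assumes l: "l \<longlonglongrightarrow> 0" and sol: "\<And>k. visc_sol (discounted_op (l k) F f d) (U k)"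
    and unif: "\<And>i. uniform_limit UNIV (\<lambda>k. U k i) (v i) sequentially"
    and v: "\<And>i. continuous_on UNIV (v i) \<and> torus_periodic (v i)"
  shows "visc_sol (ergodic_op (\<lambda>i. 0) F f d) v"
proof -
  have Ucont: "\<And>k i. continuous_on UNIV (U k i)"
    and sub: "\<And>k. visc_subsol (discounted_op (l k) F f d) (U k)"
    and super: "\<And>k. visc_supersol (discounted_op (l k) F f d) (U k)"
    using sol unfolding visc_sol_def by blast+
  have vcont: "\<And>i. continuous_on UNIV (v i)" using v by blast
  note op_lim = discounted_op_tendsto_ergodic_op[OF l]
  have "visc_subsol (ergodic_op (\<lambda>i. 0) F f d) v"
    by (rule visc_subsol_stable[OF sub Ucont unif vcont op_lim])
  moreover have "visc_supersol (ergodic_op (\<lambda>i. 0) F f d) v"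
    by (rule visc_supersol_stable[OF super Ucont unif vcont op_lim])
  ultimately show ?thesis using v unfolding visc_sol_def by blast
qed

lemma vanishing_discount_subsequence:
  assumes xsF: "(\<Sum>j\<in>UNIV. f j xs) = 0" and pos: "\<And>k. 0 < lam k" and lim: "lam \<longlonglongrightarrow> 0"
    and sol: "\<And>k. visc_sol (discounted_op (lam k) F f d) (U k)"
  obtains r v L where "strict_mono r"
    "\<And>i. uniform_limit UNIV (\<lambda>k. U (r k) i) (v i) sequentially"
    "\<And>i. uniform_limit UNIV (\<lambda>k x. - lam (r k) * U (r k) i x) (\<lambda>x. 0) sequentially"
    "\<And>i. L-lipschitz_on UNIV (v i)" "visc_sol (ergodic_op (\<lambda>i. 0) F f d) v"
    "\<And>i z. (\<Sum>j\<in>UNIV. f j z) = 0 \<Longrightarrow> v i z = 0"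
proof -
  obtain C where C: "\<And>lam u i x. 0 < lam \<Longrightarrow> visc_sol (discounted_op lam F f d) u \<Longrightarrow> 0 \<le> u i x \<and> u i x \<le> C"
    using discounted_solution_bounded[OF xsF] by blast
  obtain L where L: "\<And>lam u i. 0 < lam \<Longrightarrow> visc_sol (discounted_op lam F f d) u \<Longrightarrow> L-lipschitz_on UNIV (u i)"
    using discounted_solution_lipschitz[OF xsF] by blast
  have bound: "\<bar>U k i x\<bar> \<le> C" for k i x using C[OF pos sol, of k i x] by simp
  have lip: "L-lipschitz_on UNIV (U k i)" for k i using L[OF pos sol] .
  have per: "torus_periodic (U k i)" for k i using sol[of k] unfolding visc_sol_def by blast
  obtain r v where r: "strict_mono r" and conv: "\<And>i. uniform_limit UNIV (\<lambda>k. U (r k) i) (v i) sequentially"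
    by (rule periodic_equilipschitz_convergent_subsequence[of U C L, OF bound lip per]) (rule that)
  have ptw: "(\<lambda>k. U (r k) i x) \<longlonglongrightarrow> v i x" for i x by (rule tendsto_uniform_limitI[OF conv]) simp
  have lim_r: "(\<lambda>k. lam (r k)) \<longlonglongrightarrow> 0" using LIMSEQ_subseq_LIMSEQ[OF lim r] by (simp add: o_def)
  have v_lip: "L-lipschitz_on UNIV (v i)" for i
    using lipschitz_on_pointwise_limit[OF ptw lip lipschitz_on_nonneg[OF lip]] .
  have v_per: "torus_periodic (v i)" for i using torus_periodic_pointwise_limit[OF ptw per] .
  have v_sol: "visc_sol (ergodic_op (\<lambda>i. 0) F f d) v"
    by (rule vanishing_discount_limit[OF lim_r sol conv])
      (use v_per lipschitz_on_continuous_on[OF v_lip] in blast)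
  have v_zero: "v i z = 0" if "(\<Sum>j\<in>UNIV. f j z) = 0" for i z
  proof -
    have "(\<lambda>k. U (r k) i z) \<longlonglongrightarrow> 0"
      using discounted_solution_vanishes_on_zero_set[OF pos sol that] by simp
    then show ?thesis by (rule LIMSEQ_unique[OF ptw])
  qed
  have discount_term: "uniform_limit UNIV (\<lambda>k x. - lam (r k) * U (r k) i x) (\<lambda>x. 0) sequentially" for i
    by (rule uniform_limit_vanishing_times_bounded[OF lim_r bound])
  show thesis by (rule that[OF r conv discount_term v_lip v_sol v_zero])
qed

end

section \<open>The vanishing discount limit\<close>

theorem theorem4p2:
  fixes F :: "'m::finite \<Rightarrow> real^'n \<Rightarrow> real^'n \<Rightarrow> real"
    and f :: "'m \<Rightarrow> real^'n \<Rightarrow> real"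
    and d :: "real^'n \<Rightarrow> 'm \<Rightarrow> 'm \<Rightarrow> real"
    and vl :: "real \<Rightarrow> 'm \<Rightarrow> real^'n \<Rightarrow> real"
    and xs :: "real^'n"
  assumes H0_f: "\<And>i. continuous_on UNIV (f i) \<and> torus_periodic (f i)"
    and H0_F: "\<And>i. continuous_on UNIV (\<lambda>(x, p). F i x p)"
    and H0_Fper: "\<And>i p. torus_periodic (\<lambda>x. F i x p)"
    and H1_convex: "\<And>i x. convex_on UNIV (F i x)"
    and H1_coercive: "\<And>i M. \<exists>R. \<forall>x p. norm p \<ge> R \<longrightarrow> F i x p \<ge> M"
    and H1_nonneg: "\<And>i x p. F i x p \<ge> 0"
    and H1_zero: "\<And>i x. F i x 0 = 0"
    and H2: "\<And>i x. f i x \<ge> 0"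
    and H3_cont: "\<And>i j. continuous_on UNIV (\<lambda>x. d x i j) \<and> torus_periodic (\<lambda>x. d x i j)"
    and H3_diag: "\<And>i x. d x i i \<ge> 0"
    and H3_off: "\<And>i j x. i \<noteq> j \<Longrightarrow> d x i j \<le> 0"
    and H3_rows: "\<And>i x. (\<Sum>j\<in>UNIV. d x i j) \<ge> 0"
    and irred: "\<And>x. irreducible_mat (d x)"
    and Fnonempty: "\<exists>x. (\<Sum>i\<in>UNIV. f i x) = 0"
    and xs_in_F: "(\<Sum>i\<in>UNIV. f i xs) = 0"
    and vl_sol: "\<And>lam. 0 < lam \<Longrightarrow> lam < 1 \<Longrightarrow> visc_sol (discounted_op lam F f d) (vl lam)"
  shows "\<exists>(l :: nat \<Rightarrow> real) (c :: 'm \<Rightarrow> real) (v :: 'm \<Rightarrow> real^'n \<Rightarrow> real).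
     (\<forall>k. 0 < l k \<and> l k < 1) \<and> l \<longlonglongrightarrow> 0
     \<and> (\<forall>i. uniform_limit UNIV (\<lambda>k x. - l k * vl (l k) i x) (\<lambda>x. c i) sequentially)
     \<and> (\<forall>i. uniform_limit UNIV (\<lambda>k x. vl (l k) i x - vl (l k) i xs) (v i) sequentially)
     \<and> visc_sol (ergodic_op c F f d) v
     \<and> (\<exists>L. \<forall>i. L-lipschitz_on UNIV (v i))
     \<and> in_ker_all d c
     \<and> (\<forall>i x. (\<Sum>j\<in>UNIV. f j x) = 0 \<longrightarrow> v i x = 0)
     \<and> c = (\<lambda>i. 0)
     \<and> (\<forall>c'. in_ker_all d c' \<and> (\<exists>w. visc_sol (ergodic_op c' F f d) w) \<longrightarrow> c' = (\<lambda>i. 0))"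
proof -
  interpret S: weakly_coupled_system F f d
    by unfold_locales (fact H0_f H0_F H1_coercive H1_nonneg H1_zero H2 H3_cont H3_off H3_rows)+
  define l0 where "l0 = (\<lambda>k::nat. inverse (real (Suc (Suc k))))"
  have l0: "0 < l0 k" "l0 k < 1" for k unfolding l0_def by (auto simp: field_simps)
  have l0_lim: "l0 \<longlonglongrightarrow> 0" unfolding l0_def by (rule LIMSEQ_Suc[OF LIMSEQ_inverse_real_of_nat])
  have sol: "visc_sol (discounted_op (l0 k) F f d) (vl (l0 k))" for k using vl_sol l0 by blast
  obtain r v L where r: "strict_mono r"
    and conv: "\<And>i. uniform_limit UNIV (\<lambda>k. vl (l0 (r k)) i) (v i) sequentially"
    and discount_term: "\<And>i. uniform_limit UNIV (\<lambda>k x. - l0 (r k) * vl (l0 (r k)) i x) (\<lambda>x. 0) sequentially"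
    and v_lip: "\<And>i. L-lipschitz_on UNIV (v i)" and v_sol: "visc_sol (ergodic_op (\<lambda>i. 0) F f d) v"
    and v_zero: "\<And>i z. (\<Sum>j\<in>UNIV. f j z) = 0 \<Longrightarrow> v i z = 0"
    by (rule S.vanishing_discount_subsequence[OF xs_in_F l0(1) l0_lim sol]) (rule that)
  define l where "l = l0 \<circ> r"
  have "l \<longlonglongrightarrow> 0" unfolding l_def using LIMSEQ_subseq_LIMSEQ[OF l0_lim r] .
  moreover have "0 < l k \<and> l k < 1" for k unfolding l_def using l0 by simp
  text \<open>The solutions vanish at xs, so the normalization by vl(xs) is void.\<close>
  moreover have "vl (l k) i xs = 0" for k i
    using S.discounted_solution_vanishes_on_zero_set[OF l0(1) sol xs_in_F] unfolding l_def by simp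
  ultimately show ?thesis
    using conv discount_term v_sol v_lip v_zero S.ergodic_constant_unique[OF irred xs_in_F]
    by (intro exI[of _ l] exI[of _ "\<lambda>i. 0"] exI[of _ v]) (auto simp: l_def in_ker_all_def)
qed

end
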